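(* Let $f\in\mathbb{Q}[x]$ be such that $f=f_1\cdots f_u$ for distinct irreducible $f_1,\dots,f_u\in\mathbb{Q}[x]$. For each $i$, let $m_i\in\mathbb{N}$ be minimal such that $f_i\mid(x^{m_i}-r_i)$ for some $r_i\in\mathbb{Q}$, and suppose $f\mid(x^m-r)$ for some positive integer $m$ and $r\in\mathbb{Q}$. Then $\operatorname{lcm}(m_1,\dots,m_u)\mid m$. *)

theory Defs
  imports "HOL-Computational_Algebra.Polynomial"
begin

definition min_binom_exp :: "rat poly \<Rightarrow> nat" where
  "min_binom_exp g = (LEAST k. 0 < k \<and> (\<exists>r::rat. g dvd ([:0, 1:] ^ k - [:r:])))"

end

theory Submission
  imports Defs "HOL-Computational_Algebra.Polynomial_Factorial"
begin

text \<open>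
  If an irreducible \<open>g\<close> divides both \<open>x\<^sup>k - s\<close> and \<open>x\<^sup>m - r\<close>, then reducing \<open>x\<^sup>m\<close>
  modulo \<open>x\<^sup>k - s\<close> shows that \<open>g\<close> also divides a binomial of degree \<open>m mod k\<close>.
  So the set of exponents \<open>k > 0\<close> for which \<open>g\<close> divides some \<open>x\<^sup>k - s\<close> is closed
  under positive remainders, and its least element divides each of its elements.
  Every irreducible factor of \<open>f\<close> divides \<open>x\<^sup>m - r\<close>, hence its minimal exponent
  divides \<open>m\<close>, and so does their lcm.
\<close>

lemma Least_dvd_if_closed_under_mod:
  fixes P :: "nat \<Rightarrow> bool"
  assumes "P m"
    and pos: "\<And>k. P k \<Longrightarrow> 0 < k"
    and mod_closed: "\<And>a b. P a \<Longrightarrow> P b \<Longrightarrow> b mod a \<noteq> 0 \<Longrightarrow> P (b mod a)"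
  shows "(LEAST k. P k) dvd m"
proof -
  define k where "k = (LEAST k. P k)"
  have "P k" unfolding k_def using \<open>P m\<close> by (rule LeastI)
  have "m mod k = 0"
  proof (rule ccontr)
    assume "m mod k \<noteq> 0"
    then have "P (m mod k)" using mod_closed \<open>P k\<close> \<open>P m\<close> by blast
    then have "k \<le> m mod k" unfolding k_def by (rule Least_le)
    moreover have "m mod k < k" using pos[OF \<open>P k\<close>] by simp
    ultimately show False by simp
  qed
  then show ?thesis unfolding k_def[symmetric] by auto
qed

lemma diff_dvd_power_diff:
  fixes x y :: "'a :: comm_ring_1"
  shows "(x - y) dvd (x ^ n - y ^ n)"
  by (simp add: power_diff_sumr2)

lemma dvd_binomial_mod:
  fixes g x s r :: "'a :: comm_ring_1"
  assumes "g dvd x ^ k - s" and "g dvd x ^ m - r"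
  shows "g dvd s ^ (m div k) * x ^ (m mod k) - r"
proof -
  let ?q = "m div k" and ?t = "m mod k"
  have "g dvd (x ^ k) ^ ?q - s ^ ?q"
    using assms(1) diff_dvd_power_diff dvd_trans by blast
  then have "g dvd x ^ ?t * ((x ^ k) ^ ?q - s ^ ?q)"
    by (rule dvd_mult)
  then have "g dvd (x ^ m - r) - x ^ ?t * ((x ^ k) ^ ?q - s ^ ?q)"
    using assms(2) by (rule dvd_diff[rotated])
  moreover have "x ^ m = x ^ ?t * (x ^ k) ^ ?q"
    by (metis div_mult_mod_eq power_add power_mult mult.commute)
  ultimately show ?thesis
    by (simp add: algebra_simps)
qed

lemma irreducible_dvd_power_of_x:
  fixes g :: "'a :: field poly"
  assumes "irreducible g" and "g dvd [:0, 1:] ^ k" and "0 < t"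
  shows "g dvd [:0, 1:] ^ t"
proof -
  have "g dvd [:0, 1:]"
    using assms(1,2) field_poly_irreducible_imp_prime prime_elem_dvd_power by blast
  then show ?thesis
    using \<open>0 < t\<close> dvd_power dvd_trans by blast
qed

lemma irreducible_binomial_exponent_mod:
  fixes g :: "'a :: field poly"
  assumes irr: "irreducible g"
    and dk: "g dvd [:0, 1:] ^ k - [:s:]"
    and dm: "g dvd [:0, 1:] ^ m - [:r:]"
    and t: "0 < m mod k"
  shows "\<exists>c. g dvd [:0, 1:] ^ (m mod k) - [:c:]"
proof (cases "s = 0")
  case True
  then have "g dvd [:0, 1:] ^ (m mod k) - [:0:]"
    using irreducible_dvd_power_of_x[OF irr _ t] dk by simp
  then show ?thesis by blast
next
  case False
  let ?c = "s ^ (m div k)"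
  have "g dvd [:?c:] * [:0, 1:] ^ (m mod k) - [:r:]"
    using dvd_binomial_mod[OF dk dm] by (simp add: poly_const_pow)
  then have "g dvd smult (inverse ?c) ([:?c:] * [:0, 1:] ^ (m mod k) - [:r:])"
    by (simp add: dvd_smult)
  also have "smult (inverse ?c) ([:?c:] * [:0, 1:] ^ (m mod k) - [:r:])
      = [:0, 1:] ^ (m mod k) - [:r / ?c:]"
    using False by (simp add: smult_diff_right divide_inverse mult.commute)
  finally show ?thesis by blast
qed

lemma min_binom_exp_dvd:
  fixes g :: "rat poly" and r :: rat
  assumes "irreducible g" and "0 < m" and "g dvd [:0, 1:] ^ m - [:r:]"
  shows "min_binom_exp g dvd m"
  unfolding min_binom_exp_def
proof (rule Least_dvd_if_closed_under_mod)
  show "0 < m \<and> (\<exists>r. g dvd [:0, 1:] ^ m - [:r:])"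
    using assms(2,3) by blast
next
  fix a b
  assume "0 < a \<and> (\<exists>r. g dvd [:0, 1:] ^ a - [:r:])"
    and "0 < b \<and> (\<exists>r. g dvd [:0, 1:] ^ b - [:r:])"
    and "b mod a \<noteq> 0"
  then show "0 < b mod a \<and> (\<exists>r. g dvd [:0, 1:] ^ (b mod a) - [:r:])"
    using irreducible_binomial_exponent_mod[OF assms(1)] by blast
qed simp

theorem lemma3p4:
  fixes F :: "rat poly set" and f :: "rat poly" and m :: nat and r :: rat
  assumes "finite F"
    and "\<And>g. g \<in> F \<Longrightarrow> irreducible g"
    and "f = (\<Prod>g\<in>F. g)"
    and "0 < m"
    and "f dvd ([:0, 1:] ^ m - [:r:])"
  shows "Lcm (min_binom_exp ` F) dvd m"
proof (rule Lcm_least, clarify)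
  fix g assume "g \<in> F"
  then have "g dvd f" using assms(1,3) by (simp add: dvd_prod_eqI)
  then have "g dvd [:0, 1:] ^ m - [:r:]" using assms(5) dvd_trans by blast
  then show "min_binom_exp g dvd m"
    using min_binom_exp_dvd assms(2)[OF \<open>g \<in> F\<close>] assms(4) by blast
qed

end
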